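(* Let $\{X_n\}$ be the Bessel-like walk of the context, $f_m=P_0(\tau_0=m)$ for $m\ge1$, and for even $0<m<n$ let $A_{m,n}=\frac{2}{n-m+2}\sum_{j=m}^nf_j$. Then for all even integers $0<k<m$, \[ f_m\le\frac{f_{m+k}+f_{m-k}}{2}\qquad\text{and}\qquad f_m\le A_{m-k,m+k}. \]
   Context: Let $\{X_n\}_{n\ge0}$ be a Markov chain on $\mathbb{Z}_+=\{0,1,2,\dots\}$ with steps $\pm1$, reflecting at $0$ (i.e. $p(0,1)=1$), and for $x\ge1$ transition probabilities $p_x=p(x,x+1)$, $q_x=p(x,x-1)=1-p_x$, where $p_x=\frac12\left(1-\frac{\delta}{2x}+\frac{R_x}{2}\right)$ for a fixed $\delta\ge-1$ and $R_x=o(1/x)$, and $p_x,q_x\in[\epsilon,1-\epsilon]$ for some $\epsilon>0$ and all $x\ge1$. $P_0$ is the law of the chain started at $0$, and $\tau_0=\min\{n\ge1:X_n=0\}$ is the first return time to $0$. *)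

theory Defs
  imports "HOL-Analysis.Analysis"
begin

definition step_prob :: "(nat \<Rightarrow> real) \<Rightarrow> nat \<Rightarrow> nat \<Rightarrow> real" where
  "step_prob p x y = (if y = Suc x then p x else if Suc y = x then 1 - p x else 0)"

text \<open>Paths of length m (m steps) from 0 back to 0 that do not visit 0 at times 1..m-1.
  Entries are bounded by m (automatic for nearest-neighbour paths from 0), so the set is finite.\<close>

definition return_paths :: "nat \<Rightarrow> nat list set" where
  "return_paths m = {xs. length xs = Suc m \<and> set xs \<subseteq> {0..m} \<and>
      xs ! 0 = 0 \<and> xs ! m = 0 \<and> (\<forall>i. 0 < i \<and> i < m \<longrightarrow> xs ! i \<noteq> 0)}"

definition first_return :: "(nat \<Rightarrow> real) \<Rightarrow> nat \<Rightarrow> real" where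
  "first_return p m = (\<Sum>xs\<in>return_paths m. \<Prod>i<m. step_prob p (xs ! i) (xs ! Suc i))"

definition A_avg :: "(nat \<Rightarrow> real) \<Rightarrow> nat \<Rightarrow> nat \<Rightarrow> real" where
  "A_avg p m n = 2 / (real n - real m + 2) * (\<Sum>j=m..n. first_return p j)"

end

theory Submission
  imports Defs
begin

text \<open>A first return to 0 at time n + 2 consists of a step 0 \<rightarrow> 1, an n-step walk from 1 to 1
  avoiding 0, and a step 1 \<rightarrow> 0; so f(n+2) = p(0) q(1) g(n), where g(n) is the corresponding
  taboo probability. The walk killed at 0 is a nearest-neighbour chain, hence reversible, so its
  transition operator T is self-adjoint in the space weighted by the inverse reversible measure.
  Then g(a + b) = \<langle>T^a e1, T^b e1\<rangle> and 2\<langle>u,v\<rangle> \<le> \<langle>u,u\<rangle> + \<langle>v,v\<rangle> give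
  2 g(a + b) \<le> g(2a) + g(2b): the return probabilities are midpoint convex along even times.
  Averaging these inequalities over the symmetric window, in which the odd times contribute
  nothing, yields the bound by A. Only 0 < p(x) < 1 for x \<ge> 1 is used.\<close>

definition path_weight :: "(nat \<Rightarrow> real) \<Rightarrow> nat list \<Rightarrow> real" where
  "path_weight p xs = (\<Prod>i<length xs - 1. step_prob p (xs ! i) (xs ! Suc i))"

lemma path_weight_snoc:
  "xs \<noteq> [] \<Longrightarrow> path_weight p (xs @ [y]) = path_weight p xs * step_prob p (last xs) y"
proof -
  assume "xs \<noteq> []"
  then obtain n where n: "length xs = Suc n" by (cases xs) auto
  have "(\<Prod>i<n. step_prob p ((xs @ [y]) ! i) ((xs @ [y]) ! Suc i)) = path_weight p xs"
    unfolding path_weight_def using n by (intro prod.cong) (auto simp: nth_append)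
  moreover have "last xs = xs ! n" using n last_conv_nth[of xs] by fastforce
  ultimately show ?thesis
    using n unfolding path_weight_def by (simp add: nth_append)
qed

lemma path_weight_Cons:
  "zs \<noteq> [] \<Longrightarrow> path_weight p (x # zs) = step_prob p x (hd zs) * path_weight p zs"
proof -
  assume "zs \<noteq> []"
  then obtain n where n: "length zs = Suc n" by (cases zs) auto
  have "path_weight p (x # zs) = (\<Prod>i<Suc n. step_prob p ((x # zs) ! i) ((x # zs) ! Suc i))"
    unfolding path_weight_def using n by simp
  also have "\<dots> = step_prob p x (zs ! 0) * path_weight p zs"
    unfolding prod.lessThan_Suc_shift path_weight_def using n by simp
  finally show ?thesis using \<open>zs \<noteq> []\<close> by (simp add: hd_conv_nth)
qed

lemma step_prob_even_eq_0: "even (x + y) \<Longrightarrow> step_prob p x y = 0"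
  by (auto simp: step_prob_def)

lemma nonzero_path_parity:
  assumes "(\<Prod>i<m. step_prob p (xs ! i) (xs ! Suc i)) \<noteq> 0"
  shows "even (xs ! 0 + xs ! m + m)"
  using assms
proof (induction m)
  case (Suc m)
  then have "step_prob p (xs ! m) (xs ! Suc m) \<noteq> 0" "even (xs ! 0 + xs ! m + m)" by auto
  then show ?case using step_prob_even_eq_0 by fastforce
qed simp

lemma first_return_odd: "odd m \<Longrightarrow> first_return p m = 0"
proof -
  assume "odd m"
  have zero: "(\<Prod>i<m. step_prob p (xs ! i) (xs ! Suc i)) = 0" if "xs \<in> return_paths m" for xs
    using that nonzero_path_parity[where p=p and xs=xs and m=m] \<open>odd m\<close>
    by (auto simp: return_paths_def)
  show ?thesis unfolding first_return_def by (rule sum.neutral) (use zero in blast)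
qed

text \<open>The transition operator of the walk killed on leaving {1..L}, acting on measures.
  The cut-off keeps all sums finite and is invisible to n steps started at 1 once n < L.\<close>

definition killed_step :: "(nat \<Rightarrow> real) \<Rightarrow> nat \<Rightarrow> (nat \<Rightarrow> real) \<Rightarrow> nat \<Rightarrow> real" where
  "killed_step p L u y = (\<Sum>z=1..L. u z * step_prob p z y)"

definition taboo_return :: "(nat \<Rightarrow> real) \<Rightarrow> nat \<Rightarrow> nat \<Rightarrow> real" where
  "taboo_return p L n = (killed_step p L ^^ n) (indicator {1}) 1"

definition positive_walks :: "nat \<Rightarrow> nat \<Rightarrow> nat \<Rightarrow> nat list set" where
  "positive_walks L n y =
    {xs. length xs = Suc n \<and> set xs \<subseteq> {1..L} \<and> hd xs = 1 \<and> last xs = y}"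

lemma finite_positive_walks: "finite (positive_walks L n y)"
proof (rule finite_subset)
  show "positive_walks L n y \<subseteq> {xs. set xs \<subseteq> {1..L} \<and> length xs = Suc n}"
    unfolding positive_walks_def by auto
qed (rule finite_lists_length_eq, simp)

lemma positive_walks_0: "y \<in> {1..L} \<Longrightarrow> positive_walks L 0 y = (if y = 1 then {[1]} else {})"
  by (auto simp: positive_walks_def length_Suc_conv)

lemma positive_walks_Suc:
  assumes "y \<in> {1..L}"
  shows "positive_walks L (Suc n) y = (\<Union>z\<in>{1..L}. (\<lambda>xs. xs @ [y]) ` positive_walks L n z)"
proof (intro equalityI subsetI)
  fix xs assume "xs \<in> positive_walks L (Suc n) y"
  then have xs: "length xs = Suc (Suc n)" "set xs \<subseteq> {1..L}" "hd xs = 1" "last xs = y"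
    unfolding positive_walks_def by auto
  define ys where "ys = butlast xs"
  have ys: "xs = ys @ [y]" "ys \<noteq> []"
    using xs append_butlast_last_id[of xs] unfolding ys_def by (auto simp flip: length_0_conv)
  have "set ys \<subseteq> {1..L}" using xs ys by auto
  moreover have "last ys \<in> {1..L}"
    using \<open>set ys \<subseteq> {1..L}\<close> last_in_set[OF ys(2)] by blast
  ultimately have "ys \<in> positive_walks L n (last ys)" "last ys \<in> {1..L}"
    using xs ys unfolding positive_walks_def by auto
  with ys show "xs \<in> (\<Union>z\<in>{1..L}. (\<lambda>xs. xs @ [y]) ` positive_walks L n z)" by blast
next
  fix xs assume "xs \<in> (\<Union>z\<in>{1..L}. (\<lambda>xs. xs @ [y]) ` positive_walks L n z)"
  then show "xs \<in> positive_walks L (Suc n) y"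
    using assms unfolding positive_walks_def by (auto simp flip: length_greater_0_conv)
qed

lemma sum_positive_walks:
  "y \<in> {1..L} \<Longrightarrow>
    sum (path_weight p) (positive_walks L n y) = (killed_step p L ^^ n) (indicator {1}) y"
proof (induction n arbitrary: y)
  case 0
  then show ?case by (simp add: positive_walks_0 path_weight_def)
next
  case (Suc n)
  have "sum (path_weight p) (positive_walks L (Suc n) y)
      = (\<Sum>z=1..L. sum (path_weight p) ((\<lambda>xs. xs @ [y]) ` positive_walks L n z))"
    unfolding positive_walks_Suc[OF Suc.prems]
  proof (rule sum.UNION_disjoint)
    show "\<forall>z\<in>{1..L}. finite ((\<lambda>xs. xs @ [y]) ` positive_walks L n z)"
      by (simp add: finite_positive_walks)
  qed (auto simp: positive_walks_def)
  also have "\<dots> = (\<Sum>z=1..L. sum (path_weight p) (positive_walks L n z) * step_prob p z y)"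
  proof (rule sum.cong)
    fix z assume "z \<in> {1..L}"
    have "sum (path_weight p) ((\<lambda>xs. xs @ [y]) ` positive_walks L n z)
        = (\<Sum>xs\<in>positive_walks L n z. path_weight p (xs @ [y]))"
      by (rule sum.reindex_cong[where l="\<lambda>xs. xs @ [y]"]) (auto simp: inj_on_def)
    also have "\<dots> = (\<Sum>xs\<in>positive_walks L n z. path_weight p xs * step_prob p z y)"
      by (rule sum.cong)
        (auto simp: positive_walks_def path_weight_snoc simp flip: length_greater_0_conv)
    finally show "sum (path_weight p) ((\<lambda>xs. xs @ [y]) ` positive_walks L n z)
        = sum (path_weight p) (positive_walks L n z) * step_prob p z y"
      by (simp add: sum_distrib_right)
  qed simp
  also have "\<dots> = (\<Sum>z=1..L. (killed_step p L ^^ n) (indicator {1}) z * step_prob p z y)"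
    using Suc.IH by (intro sum.cong) auto
  also have "\<dots> = (killed_step p L ^^ Suc n) (indicator {1}) y"
    by (simp add: killed_step_def)
  finally show ?case .
qed

lemma killed_step_pow_vanishes:
  "Suc n < y \<Longrightarrow> (killed_step p L ^^ n) (indicator {1}) y = 0"
proof (induction n arbitrary: y)
  case (Suc n)
  have zero: "(killed_step p L ^^ n) (indicator {1}) x * step_prob p x y = 0" for x
    using Suc by (cases "Suc n < x") (auto simp: step_prob_def)
  show ?case
    unfolding funpow.simps comp_def
      killed_step_def[where u="(killed_step p L ^^ n) (indicator {1})"]
    by (rule sum.neutral) (use zero in blast)
qed simp

lemma killed_step_truncation:
  assumes "\<And>z. L < z \<Longrightarrow> u z = 0" "L \<le> L'"
  shows "killed_step p L' u = killed_step p L u"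
  unfolding killed_step_def using assms
  by (intro ext sum.mono_neutral_right) auto

lemma killed_step_pow_truncation:
  assumes "n < L" "L \<le> L'"
  shows "(killed_step p L' ^^ n) (indicator {1}) = (killed_step p L ^^ n) (indicator {1})"
  using assms(1)
proof (induction n)
  case (Suc n)
  have "killed_step p L' ((killed_step p L ^^ n) (indicator {1}))
      = killed_step p L ((killed_step p L ^^ n) (indicator {1}))"
    using Suc.prems assms(2) by (intro killed_step_truncation killed_step_pow_vanishes) auto
  then show ?case using Suc by simp
qed simp

lemma taboo_return_truncation:
  "n < L \<Longrightarrow> n < L' \<Longrightarrow> taboo_return p L n = taboo_return p L' n"
  unfolding taboo_return_def
  by (metis killed_step_pow_truncation linorder_le_cases)

lemma return_paths_Suc_Suc:
  "return_paths (Suc (Suc n)) =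
    (\<lambda>ys. 0 # ys @ [0]) ` {ys. length ys = Suc n \<and> set ys \<subseteq> {1..n+2}}"
proof (intro equalityI subsetI)
  fix xs assume "xs \<in> return_paths (Suc (Suc n))"
  then have xs: "length xs = Suc (Suc (Suc n))" "set xs \<subseteq> {0..n+2}" "xs ! 0 = 0"
      "xs ! Suc (Suc n) = 0" "\<And>i. 0 < i \<Longrightarrow> i < Suc (Suc n) \<Longrightarrow> xs ! i \<noteq> 0"
    unfolding return_paths_def by auto
  obtain x xs' where "xs = x # xs'" using xs(1) by (cases xs) auto
  moreover have "xs' \<noteq> []" using xs(1) calculation by auto
  ultimately obtain ys z where xyz: "xs = x # ys @ [z]" by (metis append_butlast_last_id)
  then have ys: "length ys = Suc n" using xs(1) by simp
  have "0 \<notin> set ys"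
  proof
    assume "0 \<in> set ys"
    then obtain j where "j < Suc n" "ys ! j = 0" using ys by (auto simp: in_set_conv_nth)
    then show False using xs(5)[of "Suc j"] xyz ys by (simp add: nth_append)
  qed
  moreover have "set ys \<subseteq> {0..n+2}" using xs(2) xyz by auto
  ultimately have "set ys \<subseteq> {1..n+2}" by (auto simp: subset_iff Suc_le_eq) (metis gr0I)
  moreover have "xs = 0 # ys @ [0]" using xs(3,4) xyz ys by (simp add: nth_append)
  ultimately show "xs \<in> (\<lambda>ys. 0 # ys @ [0]) ` {ys. length ys = Suc n \<and> set ys \<subseteq> {1..n+2}}"
    using ys by blast
next
  fix xs assume "xs \<in> (\<lambda>ys. 0 # ys @ [0]) ` {ys. length ys = Suc n \<and> set ys \<subseteq> {1..n+2}}"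
  then obtain ys where ys: "xs = 0 # ys @ [0]" "length ys = Suc n" "set ys \<subseteq> {1..n+2}" by blast
  have "xs ! i \<noteq> 0" if i: "0 < i" "i < Suc (Suc n)" for i
  proof -
    obtain j where "i = Suc j" "j < Suc n" using i by (cases i) auto
    then have "xs ! i \<in> set ys" using ys by (simp add: nth_append)
    then show ?thesis using ys(3) by auto
  qed
  then show "xs \<in> return_paths (Suc (Suc n))"
    using ys unfolding return_paths_def by (auto simp: nth_append)
qed

lemma first_return_eq_taboo_return:
  assumes "n < L"
  shows "first_return p (Suc (Suc n)) = p 0 * (1 - p 1) * taboo_return p L n"
proof -
  define B where "B = {ys. length ys = Suc n \<and> set ys \<subseteq> {1..n+2}}"
  have "finite B"
    unfolding B_def using finite_lists_length_eq[of "{1..n+2}" "Suc n"] by (simp add: conj_commute)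
  have weight: "path_weight p (0 # ys @ [0])
      = (if hd ys = 1 \<and> last ys = 1 then p 0 * (1 - p 1) * path_weight p ys else 0)"
    if "ys \<in> B" for ys
  proof -
    have "ys \<noteq> []" using that unfolding B_def by auto
    then have "path_weight p (0 # ys @ [0])
        = step_prob p 0 (hd ys) * path_weight p ys * step_prob p (last ys) 0"
      by (simp add: path_weight_Cons path_weight_snoc)
    then show ?thesis by (simp add: step_prob_def)
  qed
  have "first_return p (Suc (Suc n)) = (\<Sum>ys\<in>B. path_weight p (0 # ys @ [0]))"
    unfolding first_return_def return_paths_Suc_Suc B_def[symmetric]
    by (rule sum.reindex_cong[where l="\<lambda>ys. 0 # ys @ [0]"])
       (auto simp: inj_on_def path_weight_def B_def)
  also have "\<dots> = (\<Sum>ys\<in>B.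
      if hd ys = 1 \<and> last ys = 1 then p 0 * (1 - p 1) * path_weight p ys else 0)"
    using weight by (rule sum.cong[OF refl])
  also have "\<dots> =
      (\<Sum>ys\<in>{ys\<in>B. hd ys = 1 \<and> last ys = 1}. p 0 * (1 - p 1) * path_weight p ys)"
    by (simp only: sum.inter_filter[OF \<open>finite B\<close>])
  also have "{ys\<in>B. hd ys = 1 \<and> last ys = 1} = positive_walks (n+2) n 1"
    unfolding B_def positive_walks_def by auto
  also have "(\<Sum>ys\<in>positive_walks (n+2) n 1. p 0 * (1 - p 1) * path_weight p ys)
      = p 0 * (1 - p 1) * taboo_return p (n+2) n"
    by (simp add: sum_distrib_left[symmetric] sum_positive_walks taboo_return_def)
  finally show ?thesis using taboo_return_truncation[of n "n+2" L p] assms by simp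
qed

definition rev_measure :: "(nat \<Rightarrow> real) \<Rightarrow> nat \<Rightarrow> real" where
  "rev_measure p x = (\<Prod>i=1..<x. p i / (1 - p (Suc i)))"

definition rev_inner ::
  "(nat \<Rightarrow> real) \<Rightarrow> nat \<Rightarrow> (nat \<Rightarrow> real) \<Rightarrow> (nat \<Rightarrow> real) \<Rightarrow> real" where
  "rev_inner p L u v = (\<Sum>y=1..L. u y * v y / rev_measure p y)"

lemma rev_measure_1 [simp]: "rev_measure p (Suc 0) = 1"
  by (simp add: rev_measure_def)

lemma rev_inner_indicator_1: "0 < L \<Longrightarrow> rev_inner p L (indicator {1}) w = w 1"
proof -
  assume "0 < L"
  have "rev_inner p L (indicator {1}) w = (\<Sum>y=1..L. if y = 1 then w 1 else 0)"
    unfolding rev_inner_def by (rule sum.cong) (auto simp: indicator_def)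
  then show ?thesis using \<open>0 < L\<close> by simp
qed

locale reflecting_walk =
  fixes p :: "nat \<Rightarrow> real"
  assumes p_0: "p 0 = 1"
    and p_pos: "1 \<le> x \<Longrightarrow> 0 < p x"
    and p_less_1: "1 \<le> x \<Longrightarrow> p x < 1"
begin

lemma rev_measure_pos: "0 < rev_measure p x"
  unfolding rev_measure_def using p_pos p_less_1 by (intro prod_pos) (auto intro!: divide_pos_pos)

lemma detailed_balance:
  assumes "1 \<le> y" "1 \<le> z"
  shows "step_prob p z y / rev_measure p y = step_prob p y z / rev_measure p z"
proof -
  have balance: "p x / rev_measure p (Suc x) = (1 - p (Suc x)) / rev_measure p x" if "1 \<le> x" for x
  proof -
    have step: "rev_measure p (Suc x) = rev_measure p x * (p x / (1 - p (Suc x)))"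
      unfolding rev_measure_def using that by (simp add: prod.atLeastLessThan_Suc)
    show ?thesis
      unfolding step using rev_measure_pos[of x] p_pos[OF that] p_less_1[of "Suc x"]
      by (simp add: field_simps)
  qed
  show ?thesis
    using assms balance[of z] balance[of y] by (auto simp: step_prob_def)
qed

lemma rev_inner_killed_step:
  "rev_inner p L (killed_step p L u) v = rev_inner p L u (killed_step p L v)"
proof -
  have "rev_inner p L (killed_step p L u) v
      = (\<Sum>y=1..L. \<Sum>z=1..L. u z * v y * (step_prob p z y / rev_measure p y))"
    unfolding rev_inner_def killed_step_def
    by (simp add: sum_distrib_left sum_divide_distrib mult_ac)
  also have "\<dots> = (\<Sum>y=1..L. \<Sum>z=1..L. u z * v y * (step_prob p y z / rev_measure p z))"
    by (intro sum.cong refl) (simp add: detailed_balance)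
  also have "\<dots> = rev_inner p L u (killed_step p L v)"
    unfolding rev_inner_def killed_step_def
    by (subst sum.swap) (simp add: sum_distrib_left sum_divide_distrib mult_ac)
  finally show ?thesis .
qed

lemma rev_inner_killed_step_pow:
  "rev_inner p L ((killed_step p L ^^ a) u) ((killed_step p L ^^ b) v)
    = rev_inner p L u ((killed_step p L ^^ (a + b)) v)"
proof (induction a arbitrary: b)
  case (Suc a)
  then show ?case
    using rev_inner_killed_step[where u="(killed_step p L ^^ a) u"] Suc.IH[of "Suc b"] by simp
qed simp

lemma rev_inner_mixed_le: "2 * rev_inner p L u v \<le> rev_inner p L u u + rev_inner p L v v"
proof -
  have "2 * rev_inner p L u v = (\<Sum>y=1..L. 2 * (u y * v y) / rev_measure p y)"
    unfolding rev_inner_def by (simp add: sum_distrib_left)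
  also have "\<dots> \<le> (\<Sum>y=1..L. (u y * u y + v y * v y) / rev_measure p y)"
  proof (intro sum_mono divide_right_mono)
    fix y
    show "2 * (u y * v y) \<le> u y * u y + v y * v y"
      using sum_squares_bound[of "u y" "v y"] by (simp add: power2_eq_square)
    show "0 \<le> rev_measure p y" using rev_measure_pos[of y] by simp
  qed
  also have "\<dots> = rev_inner p L u u + rev_inner p L v v"
    unfolding rev_inner_def by (simp add: sum.distrib add_divide_distrib)
  finally show ?thesis .
qed

lemma taboo_return_midpoint_convex:
  assumes "0 < L"
  shows "2 * taboo_return p L (a + b) \<le> taboo_return p L (2 * a) + taboo_return p L (2 * b)"
proof -
  have inner: "rev_inner p L ((killed_step p L ^^ c) (indicator {1}))
      ((killed_step p L ^^ d) (indicator {1})) = taboo_return p L (c + d)" for c d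
    unfolding rev_inner_killed_step_pow rev_inner_indicator_1[OF assms] taboo_return_def ..
  show ?thesis
    using rev_inner_mixed_le[of L "(killed_step p L ^^ a) (indicator {1})"
        "(killed_step p L ^^ b) (indicator {1})"]
    unfolding inner mult_2 .
qed

lemma first_return_midpoint_convex:
  assumes "even (m - k)" "k < m"
  shows "2 * first_return p m \<le> first_return p (m - k) + first_return p (m + k)"
proof -
  obtain j where j: "m - k = 2 * j" using assms(1) by blast
  have "0 < j" using j assms(2) by simp
  define c where "c = j - 1"
  have idx: "m - k = Suc (Suc (2 * c))" "m = Suc (Suc (c + (c + k)))"
    "m + k = Suc (Suc (2 * (c + k)))"
    using j assms(2) \<open>0 < j\<close> unfolding c_def by auto
  have q: "0 \<le> 1 - p 1" using p_less_1[of 1] by simp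
  have f: "first_return p (Suc (Suc n)) = (1 - p 1) * taboo_return p (m + k) n"
    if "n < m + k" for n
    using first_return_eq_taboo_return[OF that] p_0 by simp
  have "2 * taboo_return p (m + k) (c + (c + k))
      \<le> taboo_return p (m + k) (2 * c) + taboo_return p (m + k) (2 * (c + k))"
    using assms(2) by (intro taboo_return_midpoint_convex) simp
  from mult_left_mono[OF this q] show ?thesis
    unfolding idx using f[of "c + (c + k)"] f[of "2 * c"] f[of "2 * (c + k)"] idx
    by (simp only: distrib_left mult.left_commute[of 2])
qed

end

lemma sum_even_indices:
  fixes f :: "nat \<Rightarrow> 'a::comm_monoid_add"
  assumes "\<And>i. odd i \<Longrightarrow> f i = 0"
  shows "(\<Sum>i=0..2*n. f i) = (\<Sum>s=0..n. f (2 * s))"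
proof (induction n)
  case (Suc n)
  have "2 * Suc n = Suc (Suc (2 * n))" by simp
  then show ?case using Suc assms[of "Suc (2 * n)"] by (simp add: sum.atLeast0_atMost_Suc)
qed simp

lemma center_le_sum_of_midpoint_convex:
  fixes h :: "nat \<Rightarrow> real"
  assumes "\<And>r. r \<le> j \<Longrightarrow> 2 * h j \<le> h (j - r) + h (j + r)"
  shows "(2 * real j + 1) * h j \<le> (\<Sum>s=0..2*j. h s)"
proof -
  have "2 * ((2 * real j + 1) * h j) = (\<Sum>s=0..2*j. 2 * h j)" by simp
  also have "\<dots> \<le> (\<Sum>s=0..2*j. h s + h (2 * j - s))"
  proof (rule sum_mono)
    fix s assume "s \<in> {0..2*j}"
    then show "2 * h j \<le> h s + h (2 * j - s)"
    proof (cases "s \<le> j")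
      case True
      have "2 * h j \<le> h (j - (j - s)) + h (j + (j - s))" by (rule assms) simp
      moreover have "j - (j - s) = s" "j + (j - s) = 2 * j - s" using True by auto
      ultimately show ?thesis by simp
    next
      case False
      have "2 * h j \<le> h (j - (s - j)) + h (j + (s - j))"
        by (rule assms) (use \<open>s \<in> {0..2*j}\<close> in auto)
      moreover have "j - (s - j) = 2 * j - s" "j + (s - j) = s" using False by auto
      ultimately show ?thesis by simp
    qed
  qed
  also have "\<dots> = 2 * (\<Sum>s=0..2*j. h s)"
    using sum.atLeastAtMost_rev[of h 0 "2 * j"] by (simp add: sum.distrib)
  finally show ?thesis by simp
qed

lemma center_le_average_of_midpoint_convex:
  fixes f :: "nat \<Rightarrow> real"
  assumes odd_0: "\<And>i. odd i \<Longrightarrow> f i = 0"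
    and convex: "\<And>r. even r \<Longrightarrow> r \<le> k \<Longrightarrow> 2 * f m \<le> f (m - r) + f (m + r)"
    and "even k" "even m" "k \<le> m"
  shows "f m \<le> 2 / (real (m + k) - real (m - k) + 2) * (\<Sum>i=m-k..m+k. f i)"
proof -
  obtain j c where jc: "k = 2 * j" "m - k = 2 * c"
    using assms(3-5) by (metis dvd_def dvd_diff_nat)
  have m: "m = 2 * j + 2 * c" using jc assms(5) by simp
  have "(\<Sum>i=m-k..m+k. f i) = (\<Sum>i=0..2*(2*j). f (i + 2 * c))"
    using sum.shift_bounds_cl_nat_ivl[of f 0 "2 * c" "2 * (2 * j)"] jc m
    by (simp add: add.commute)
  also have "\<dots> = (\<Sum>s=0..2*j. f (2 * s + 2 * c))"
    using odd_0 by (subst sum_even_indices) auto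
  finally have sum_eq: "(\<Sum>i=m-k..m+k. f i) = (\<Sum>s=0..2*j. f (2 * s + 2 * c))" .
  have "2 * f (2 * j + 2 * c) \<le> f (2 * (j - r) + 2 * c) + f (2 * (j + r) + 2 * c)"
    if "r \<le> j" for r
    using convex[of "2 * r"] that jc m by (simp add: algebra_simps)
  then have le: "(2 * real j + 1) * f m \<le> (\<Sum>s=0..2*j. f (2 * s + 2 * c))"
    using center_le_sum_of_midpoint_convex[where h="\<lambda>s. f (2 * s + 2 * c)" and j=j] m by simp
  have den: "real (m + k) - real (m - k) + 2 = 2 * (2 * real j + 1)"
    using jc m by auto
  have "2 / (real (m + k) - real (m - k) + 2) * (\<Sum>i=m-k..m+k. f i)
      = (\<Sum>s=0..2*j. f (2 * s + 2 * c)) / (2 * real j + 1)"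
    unfolding sum_eq den by (simp add: field_simps)
  with le show ?thesis by (simp add: pos_le_divide_eq mult.commute)
qed

theorem lemma5p1:
  fixes p R :: "nat \<Rightarrow> real" and \<delta> \<epsilon> :: real and k m :: nat
  assumes delta: "\<delta> \<ge> -1"
    and p0: "p 0 = 1"
    and px: "\<And>x. x \<ge> 1 \<Longrightarrow> p x = 1/2 * (1 - \<delta> / (2 * real x) + R x / 2)"
    and Ro: "(\<lambda>x. real x * R x) \<longlonglongrightarrow> 0"
    and eps: "\<epsilon> > 0"
    and bounds: "\<And>x. x \<ge> 1 \<Longrightarrow> \<epsilon> \<le> p x \<and> p x \<le> 1 - \<epsilon>"
    and km: "even k" "even m" "0 < k" "k < m"
  shows "first_return p m \<le> (first_return p (m + k) + first_return p (m - k)) / 2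
    \<and> first_return p m \<le> A_avg p (m - k) (m + k)"
proof -
  interpret reflecting_walk p
    using p0 bounds eps by unfold_locales force+
  have convex: "2 * first_return p m \<le> first_return p (m - r) + first_return p (m + r)"
    if "even r" "r \<le> k" for r
    using first_return_midpoint_convex[of m r] that km by simp
  show ?thesis
    using convex[of k] center_le_average_of_midpoint_convex[OF first_return_odd convex] km
    unfolding A_avg_def by simp
qed

end
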